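(* Let $s,r,u\in \mathcal{X}$ lie in pairwise different orbits. Then there exists $F\in \mathrm{TA}_n(\mathbb{F}_q)$ such that $F([r])=[s]$ and $F([u])=[u]$. (Hence the induced action of $\mathrm{TA}_n(\mathbb{F}_q)$ on the set of orbits of size $m$ is 2-transitive.)
   Context: Fix $m$, a prime power $q$, $n\geq 3$. $\Delta=\mathrm{Gal}(\mathbb{F}_{q^m}:\mathbb{F}_q)$ acts coordinatewise on $\mathbb{F}_{q^m}^n$; $[v]$ denotes the $\Delta$-orbit of $v$, and $\mathcal{X}$ is the union of orbits of size $m$. $\mathrm{TA}_n(\mathbb{F}_q)$ is the tame automorphism group generated by invertible affine maps and triangular maps $(a_1X_1+f_1,\dots,a_nX_n+f_n)$, $a_i\in\mathbb{F}_q^*$, $f_i\in\mathbb{F}_q[X_{i+1},\dots,X_n]$. *)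

theory Defs
  imports "HOL-Computational_Algebra.Primes"
begin

text \<open>The ambient field is a finite field type 'a with CARD('a) = q^m, i.e. F_(q^m).  Points of F_(q^m)^n are
  functions nat => 'a that vanish at indices >= n (coordinates X_0..X_(n-1)).\<close>

definition Fq :: "nat \<Rightarrow> 'a::{field,finite} set" where
  "Fq q = {x. x ^ q = x}"

definition points :: "nat \<Rightarrow> (nat \<Rightarrow> 'a::zero) set" where
  "points n = {v. \<forall>i\<ge>n. v i = 0}"

definition frob_vec :: "nat \<Rightarrow> nat \<Rightarrow> (nat \<Rightarrow> 'a::{field,finite}) \<Rightarrow> (nat \<Rightarrow> 'a)" where
  "frob_vec q k v = (\<lambda>i. v i ^ (q ^ k))"

definition orbit :: "nat \<Rightarrow> nat \<Rightarrow> (nat \<Rightarrow> 'a::{field,finite}) \<Rightarrow> (nat \<Rightarrow> 'a) set" where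
  "orbit q m v = {frob_vec q k v | k. k < m}"

definition bigX :: "nat \<Rightarrow> nat \<Rightarrow> nat \<Rightarrow> (nat \<Rightarrow> 'a::{field,finite}) set" where
  "bigX q m n = {v \<in> points n. card (orbit q m v) = m}"

inductive fq_poly :: "nat \<Rightarrow> nat set \<Rightarrow> ((nat \<Rightarrow> 'a::{field,finite}) \<Rightarrow> 'a) \<Rightarrow> bool"
  for q :: nat and S :: "nat set" where
  const: "c \<in> Fq q \<Longrightarrow> fq_poly q S (\<lambda>v. c)"
| var: "i \<in> S \<Longrightarrow> fq_poly q S (\<lambda>v. v i)"
| add: "fq_poly q S f \<Longrightarrow> fq_poly q S g \<Longrightarrow> fq_poly q S (\<lambda>v. f v + g v)"
| mult: "fq_poly q S f \<Longrightarrow> fq_poly q S g \<Longrightarrow> fq_poly q S (\<lambda>v. f v * g v)"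

definition affine_maps :: "nat \<Rightarrow> nat \<Rightarrow> ((nat \<Rightarrow> 'a::{field,finite}) \<Rightarrow> (nat \<Rightarrow> 'a)) set" where
  "affine_maps q n = {F. \<exists>A b B.
      (\<forall>i<n. \<forall>j<n. A i j \<in> Fq q \<and> B i j \<in> Fq q) \<and> (\<forall>i<n. b i \<in> Fq q) \<and>
      (\<forall>i<n. \<forall>j<n. (\<Sum>k<n. B i k * A k j) = (if i = j then 1 else 0)) \<and>
      F = (\<lambda>v i. if i < n then (\<Sum>j<n. A i j * v j) + b i else 0)}"

definition triangular_maps :: "nat \<Rightarrow> nat \<Rightarrow> ((nat \<Rightarrow> 'a::{field,finite}) \<Rightarrow> (nat \<Rightarrow> 'a)) set" where
  "triangular_maps q n = {F. \<exists>a f.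
      (\<forall>i<n. a i \<in> Fq q \<and> a i \<noteq> 0 \<and> fq_poly q {i+1..<n} (f i)) \<and>
      F = (\<lambda>v i. if i < n then a i * v i + f i v else 0)}"

text \<open>TA_n(F_q) (acting on F_(q^m)^n): generated under composition by affine and
  triangular maps; both generating sets are closed under inversion, so the generated
  monoid is the generated group.\<close>
inductive_set tame :: "nat \<Rightarrow> nat \<Rightarrow> ((nat \<Rightarrow> 'a::{field,finite}) \<Rightarrow> (nat \<Rightarrow> 'a)) set"
  for q :: nat and n :: nat where
  aff: "F \<in> affine_maps q n \<Longrightarrow> F \<in> tame q n"
| tri: "F \<in> triangular_maps q n \<Longrightarrow> F \<in> tame q n"
| comp: "F \<in> tame q n \<Longrightarrow> G \<in> tame q n \<Longrightarrow> F \<circ> G \<in> tame q n"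

end

theory Submission
  imports Defs "HOL-Number_Theory.Residues" "HOL-Computational_Algebra.Polynomial"
begin

(*
  Tame maps have coefficients in F_q, so they commute with the Frobenius and permute the
  Galois orbits; it suffices to find a tame F with F r = s and F u = u.  The elementary maps
  X_j := X_j + f(X_i, i ~= j), with f over F_q, are tame, and they act simultaneously on a pair
  of points.  Tracing Lagrange indicator polynomials from F_(q^m) down to F_q produces
  F_q-polynomials that take a prescribed value at x and vanish at y, provided no Frobenius
  conjugate of y agrees with x on the variables used; so coordinates of x can be changed
  freely while y stays fixed.  A counting argument with partial traces makes one coordinate
  a primitive element alpha of F_(q^m) over F_q, and with n >= 3 coordinates both pairs (r, u)
  and (s, u) are moved to the same normal pair ((alpha,0,0,...), (alpha,1,1,0,...)).  The
  moves are invertible, so composing them gives F.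
*)

section \<open>Finite fields and the Frobenius\<close>

lemma field_power_card_eq_self:
  fixes x :: "'a::{field,finite}"
  shows "x ^ card (UNIV :: 'a set) = x"
proof (cases "x = 0")
  case True
  then show ?thesis by (simp add: finite_UNIV_card_ge_0)
next
  case False
  let ?U = "UNIV - {0::'a}"
  have "bij_betw ((*) x) ?U ?U"
    by (rule bij_betwI[where g = "\<lambda>y. y / x"]) (use False in auto)
  then have "(\<Prod>y\<in>?U. x * y) = \<Prod>?U"
    by (rule prod.reindex_bij_betw)
  moreover have "(\<Prod>y\<in>?U. x * y) = x ^ card ?U * \<Prod>?U"
    by (simp add: prod.distrib)
  moreover have "\<Prod>?U \<noteq> 0"
    by simp
  ultimately have "x ^ card ?U = 1"
    by simp
  moreover have card: "card (UNIV :: 'a set) = Suc (card ?U)"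
    by (simp add: card_Diff_singleton Suc_diff_1 finite_UNIV_card_ge_0)
  ultimately show ?thesis
    by (simp only: card power_Suc mult_1_right)
qed

lemma field_power_card_minus_one:
  fixes z :: "'a::{field,finite}"
  shows "z ^ (card (UNIV :: 'a set) - 1) = (if z = 0 then 0 else 1)"
proof -
  define c where "c = card (UNIV :: 'a set) - 2"
  have "card {0, 1::'a} \<le> card (UNIV :: 'a set)"
    by (rule card_mono) simp_all
  then have c: "card (UNIV :: 'a set) = Suc (Suc c)"
    by (simp add: c_def)
  have "z * z ^ Suc c = z"
    using field_power_card_eq_self[of z] by (simp only: c power_Suc)
  then show ?thesis
    by (auto simp: c)
qed

lemma add_diff_closed_mult:
  fixes P :: "nat \<Rightarrow> bool"
  assumes add: "\<And>a b. P a \<Longrightarrow> P b \<Longrightarrow> P (a + b)"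
    and diff: "\<And>a b. P a \<Longrightarrow> P b \<Longrightarrow> b \<le> a \<Longrightarrow> P (a - b)"
    and "P a"
  shows "P (a * k)"
proof (induction k)
  case 0
  show ?case using diff[OF \<open>P a\<close> \<open>P a\<close>] by simp
next
  case (Suc k)
  then show ?case using add[OF \<open>P a\<close> Suc.IH] by simp
qed

lemma add_diff_closed_gcd:
  fixes P :: "nat \<Rightarrow> bool"
  assumes add: "\<And>a b. P a \<Longrightarrow> P b \<Longrightarrow> P (a + b)"
    and diff: "\<And>a b. P a \<Longrightarrow> P b \<Longrightarrow> b \<le> a \<Longrightarrow> P (a - b)"
  shows "P a \<Longrightarrow> P b \<Longrightarrow> P (gcd a b)"
proof (induction a b rule: gcd_nat_induct)
  case (step a b)
  have "P (b * (a div b))"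
    using add_diff_closed_mult[OF add diff \<open>P b\<close>] .
  then have "P (a - b * (a div b))"
    using diff[OF \<open>P a\<close>] by simp
  then have "P (a mod b)"
    by (simp add: minus_mult_div_eq_mod)
  then show ?case
    using step by (simp add: gcd_non_0_nat)
qed simp

lemma double_le_two_power: "2 * c \<le> (2::nat) ^ c"
proof (induction c)
  case (Suc c)
  then show ?case
    by (cases c) simp_all
qed simp

lemma pred_mult_power_half_less_power:
  assumes "2 \<le> (q::nat)"
  shows "(d - 1) * q ^ (d div 2) < q ^ d"
proof -
  have "d - 1 < 2 ^ (d - d div 2)"
  proof -
    have "(0::nat) < 2 ^ (d - d div 2)"
      by simp
    then show ?thesis
      using double_le_two_power[of "d - d div 2"] by linarith
  qed
  also have "\<dots> \<le> q ^ (d - d div 2)"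
    using assms by (simp add: power_mono)
  finally have "(d - 1) * q ^ (d div 2) < q ^ (d - d div 2) * q ^ (d div 2)"
    using assms by simp
  then show ?thesis
    by (simp flip: power_add)
qed

definition frob :: "nat \<Rightarrow> nat \<Rightarrow> 'a::{field,finite} \<Rightarrow> 'a" where
  "frob q k z = z ^ (q ^ k)"

lemma orbit_eq_image: "orbit q m v = (\<lambda>k. frob_vec q k v) ` {..<m}"
  by (auto simp: orbit_def)

lemma frob_vec_exp_0 [simp]: "frob_vec q 0 v = v"
  by (simp add: frob_vec_def)

lemma frob_vec_apply: "frob_vec q k v i = frob q k (v i)"
  by (simp add: frob_vec_def frob_def)

lemma Fq_iff_frob: "c \<in> Fq q \<longleftrightarrow> frob q 1 c = c"
  by (simp add: Fq_def frob_def)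

lemma frob_exp_0 [simp]: "frob q 0 x = x"
  by (simp add: frob_def)

lemma frob_one [simp]: "frob q k 1 = 1"
  by (simp add: frob_def)

lemma frob_mult: "frob q k (x * y) = frob q k x * frob q k y"
  by (simp add: frob_def power_mult_distrib)

lemma frob_frob: "frob q a (frob q b x) = frob q (a + b) x"
  unfolding frob_def by (metis power_add power_mult mult.commute)

locale galois_field =
  fixes q m :: nat and field_type :: "'a::{field,finite} itself"
  assumes prime_power: "\<exists>p k. prime p \<and> k > 0 \<and> q = p ^ k"
    and degree_pos: "m \<ge> 1"
    and card_field: "card (UNIV :: 'a set) = q ^ m"
begin

lemma base_ge_2: "q \<ge> 2"
proof -
  obtain p k where p: "prime p" "k > 0" "q = p ^ k"
    using prime_power by blast
  then have "p \<le> q"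
    using self_le_power[OF prime_ge_1_nat] by blast
  then show ?thesis
    using prime_ge_2_nat[OF p(1)] by linarith
qed

lemma base_eq_char_power: "\<exists>k. q = CHAR('a) ^ k"
proof -
  obtain p k where p: "prime p" "k > 0" "q = p ^ k"
    using prime_power by blast
  have char: "prime CHAR('a)"
    by (simp add: finite_imp_CHAR_pos prime_CHAR_semidom)
  have "CHAR('a) dvd p ^ (k * m)"
    using CHAR_dvd_CARD[where 'a = 'a] card_field p by (simp add: power_mult)
  then have "CHAR('a) = p"
    using char p(1) prime_dvd_power primes_dvd_imp_eq by blast
  then show ?thesis
    using p by blast
qed

lemma frob_add: "frob q k (x + y :: 'a) = frob q k x + frob q k y"
proof -
  obtain l where "q = CHAR('a) ^ l"
    using base_eq_char_power by blast
  then have "q ^ k = CHAR('a) ^ (l * k)"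
    by (simp add: power_mult)
  then show ?thesis
    unfolding frob_def
    by (intro freshmans_dream') (simp_all add: finite_imp_CHAR_pos prime_CHAR_semidom)
qed

lemma frob_zero [simp]: "frob q k (0::'a) = 0"
  using base_ge_2 by (simp add: frob_def)

lemma frob_uminus: "frob q k (- x) = - frob q k (x::'a)"
  using frob_add[of k "- x" x] by (simp add: eq_neg_iff_add_eq_0)

lemma frob_diff: "frob q k (x - y) = frob q k x - frob q k (y::'a)"
  by (metis diff_conv_add_uminus frob_add frob_uminus)

lemma frob_sum: "frob q k (\<Sum>i\<in>A. g i) = (\<Sum>i\<in>A. frob q k (g i :: 'a))"
  by (induction A rule: infinite_finite_induct) (simp_all add: frob_add)

lemma frob_degree: "frob q m (x::'a) = x"
  using field_power_card_eq_self[of x] card_field by (simp add: frob_def)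

lemma frob_degree_mult: "frob q (m * j) (x::'a) = x"
  by (induction j) (simp_all add: frob_degree flip: frob_frob)

lemma frob_mod: "frob q k (x::'a) = frob q (k mod m) x"
proof -
  have "frob q k x = frob q (k mod m) (frob q (m * (k div m)) x)"
    by (simp add: frob_frob)
  then show ?thesis
    by (simp add: frob_degree_mult)
qed

lemma frob_inj: "frob q k x = frob q k (y::'a) \<Longrightarrow> x = y"
proof -
  have "m * k - k + k = m * k"
    using degree_pos by (simp add: le_add_diff_inverse2)
  then have "frob q (m * k - k) (frob q k z) = z" for z :: 'a
    by (simp add: frob_frob frob_degree_mult)
  then show "frob q k x = frob q k y \<Longrightarrow> x = y"
    by metis
qed

lemma frob_Fq:
  assumes "c \<in> Fq q"
  shows "frob q k (c::'a) = c"
proof (induction k)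
  case (Suc k)
  have "frob q (Suc k) c = frob q k (frob q 1 c)"
    by (simp add: frob_frob)
  then show ?case
    using Suc assms by (simp add: Fq_iff_frob)
qed simp

lemma Fq_zero [simp]: "(0::'a) \<in> Fq q"
  using base_ge_2 by (simp add: Fq_def)

lemma Fq_one [simp]: "(1::'a) \<in> Fq q"
  by (simp add: Fq_def)

lemma Fq_minus_one [simp]: "(- 1 :: 'a) \<in> Fq q"
  by (simp add: Fq_iff_frob frob_uminus)

lemma frob_vec_frob_vec: "frob_vec q a (frob_vec q b v) = frob_vec q (a + b) (v::nat \<Rightarrow> 'a)"
  by (simp add: frob_vec_apply frob_frob fun_eq_iff)

lemma frob_vec_points: "v \<in> points n \<Longrightarrow> frob_vec q k (v::nat \<Rightarrow> 'a) \<in> points n"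
  by (simp add: points_def frob_vec_apply)

lemma frob_vec_degree_mult: "frob_vec q (m * j) (v::nat \<Rightarrow> 'a) = v"
  by (simp add: frob_vec_apply frob_degree_mult fun_eq_iff)

lemma frob_vec_mod: "frob_vec q k (v::nat \<Rightarrow> 'a) = frob_vec q (k mod m) v"
  by (simp add: frob_vec_apply fun_eq_iff flip: frob_mod)

lemma frob_vec_degree: "frob_vec q m (v::nat \<Rightarrow> 'a) = v"
  by (simp add: frob_vec_apply frob_degree fun_eq_iff)

lemma orbit_frob_vec: "orbit q m (frob_vec q k v) = orbit q m (v::nat \<Rightarrow> 'a)"
proof -
  have "orbit q m (frob_vec q k v) \<subseteq> orbit q m v" for k and v :: "nat \<Rightarrow> 'a"
  proof
    fix w assume "w \<in> orbit q m (frob_vec q k v)"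
    then obtain i where "w = frob_vec q (i + k) v"
      by (auto simp: orbit_def frob_vec_frob_vec)
    then have "w = frob_vec q ((i + k) mod m) v" and "(i + k) mod m < m"
      using degree_pos frob_vec_mod by auto
    then show "w \<in> orbit q m v"
      by (auto simp: orbit_def)
  qed
  moreover have "m * k - k + k = m * k"
    using degree_pos by (simp add: le_add_diff_inverse2)
  then have "v = frob_vec q (m * k - k) (frob_vec q k v)"
    by (simp add: frob_vec_frob_vec frob_vec_degree_mult)
  ultimately show ?thesis
    by (metis subset_antisym)
qed

lemma frob_fixed_add: "frob q a (y::'a) = y \<Longrightarrow> frob q b y = y \<Longrightarrow> frob q (a + b) y = y"
  by (metis frob_frob)

lemma frob_fixed_diff:
  assumes "frob q a (y::'a) = y" "frob q b y = y" "b \<le> a"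
  shows "frob q (a - b) y = y"
proof -
  have "frob q b (frob q (a - b) y) = frob q b y"
    using assms by (simp add: frob_frob)
  then show ?thesis
    by (rule frob_inj)
qed

lemma frob_fixed_gcd: "frob q a (y::'a) = y \<Longrightarrow> frob q b y = y \<Longrightarrow> frob q (gcd a b) y = y"
  using add_diff_closed_gcd[of "\<lambda>e. frob q e y = y"] frob_fixed_add frob_fixed_diff by blast

lemma frob_fixed_dvd:
  assumes "frob q a (y::'a) = y" and "a dvd b"
  shows "frob q b y = y"
proof -
  obtain k where "b = a * k"
    using assms(2) by blast
  then show ?thesis
    using add_diff_closed_mult[of "\<lambda>e. frob q e y = y"] frob_fixed_add frob_fixed_diff assms(1)
    by blast
qed

end

section \<open>Polynomial functions over F_q and traces\<close>

lemma fq_poly_cong: "fq_poly q S f \<Longrightarrow> \<forall>i\<in>S. v i = w i \<Longrightarrow> f v = f w"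
  by (induction rule: fq_poly.induct) simp_all

lemma fq_poly_rename:
  "fq_poly q S f \<Longrightarrow> \<forall>i\<in>S. \<sigma> i \<in> T \<Longrightarrow> fq_poly q T (\<lambda>v. f (v \<circ> \<sigma>))"
  by (induction rule: fq_poly.induct) (simp_all add: fq_poly.intros)

lemma fq_poly_mono: "fq_poly q S f \<Longrightarrow> S \<subseteq> T \<Longrightarrow> fq_poly q T f"
  by (induction rule: fq_poly.induct) (auto intro: fq_poly.intros)

text \<open>Linear combinations with coefficients in F_(q^m) of polynomial functions over F_q,
  i.e. the polynomial functions over F_(q^m).\<close>

inductive fq_span :: "nat \<Rightarrow> nat set \<Rightarrow> ((nat \<Rightarrow> 'a::{field,finite}) \<Rightarrow> 'a) \<Rightarrow> bool"
  for q :: nat and S :: "nat set" where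
  scale: "fq_poly q S g \<Longrightarrow> fq_span q S (\<lambda>v. c * g v)"
| add: "fq_span q S h1 \<Longrightarrow> fq_span q S h2 \<Longrightarrow> fq_span q S (\<lambda>v. h1 v + h2 v)"

lemma fq_span_const: "fq_span q S (\<lambda>v. c)"
  using fq_span.scale[OF fq_poly.const[of 1]] by (simp add: Fq_def)

lemma fq_span_var: "i \<in> S \<Longrightarrow> fq_span q S (\<lambda>v. v i)"
  using fq_span.scale[OF fq_poly.var, of i S q 1] by simp

lemma fq_span_scale: "fq_span q S h \<Longrightarrow> fq_span q S (\<lambda>v. c * h v)"
proof (induction rule: fq_span.induct)
  case (scale g c')
  then show ?case
    using fq_span.scale[of q S g "c * c'"] by (simp add: mult.assoc)
next
  case (add h1 h2)
  then show ?case
    using fq_span.add by (simp add: distrib_left)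
qed

lemma fq_span_mult_fq_poly: "fq_span q S h \<Longrightarrow> fq_poly q S g \<Longrightarrow> fq_span q S (\<lambda>v. h v * g v)"
proof (induction rule: fq_span.induct)
  case (scale g' c)
  then show ?case
    using fq_span.scale[OF fq_poly.mult[of q S g' g], of c] by (simp add: mult.assoc)
next
  case (add h1 h2)
  then show ?case
    using fq_span.add by (simp add: distrib_right)
qed

lemma fq_span_mult: "fq_span q S h \<Longrightarrow> fq_span q S h' \<Longrightarrow> fq_span q S (\<lambda>v. h v * h' v)"
proof (induction rule: fq_span.induct)
  case (scale g c)
  then have "fq_span q S (\<lambda>v. c * (h' v * g v))"
    by (intro fq_span_scale fq_span_mult_fq_poly)
  then show ?case
    by (simp add: mult_ac)
next
  case (add h1 h2)
  then show ?case
    using fq_span.add by (simp add: distrib_right)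
qed

lemma fq_span_power: "fq_span q S h \<Longrightarrow> fq_span q S (\<lambda>v. h v ^ k)"
  by (induction k) (simp_all add: fq_span_const fq_span_mult)

lemma fq_span_prod:
  "(\<And>a. a \<in> A \<Longrightarrow> fq_span q S (g a)) \<Longrightarrow> fq_span q S (\<lambda>v. \<Prod>a\<in>A. g a v)"
  by (induction A rule: infinite_finite_induct) (simp_all add: fq_span_const fq_span_mult)

definition point_indicator :: "nat set \<Rightarrow> (nat \<Rightarrow> 'a::{field,finite}) \<Rightarrow> (nat \<Rightarrow> 'a) \<Rightarrow> 'a" where
  "point_indicator S w v = (\<Prod>i\<in>S. 1 - (v i - w i) ^ (card (UNIV :: 'a set) - 1))"

lemma fq_span_point_indicator: "fq_span q S (point_indicator S w)"
  unfolding point_indicator_def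
proof (intro fq_span_prod)
  fix i assume "i \<in> S"
  then have "fq_span q S (\<lambda>v. (v i + - w i) ^ (card (UNIV :: 'a set) - 1))"
    by (intro fq_span_power fq_span.add fq_span_var fq_span_const)
  then have "fq_span q S (\<lambda>v. 1 + (- 1) * (v i + - w i) ^ (card (UNIV :: 'a set) - 1))"
    by (intro fq_span.add fq_span_const fq_span_scale)
  then show "fq_span q S (\<lambda>v. 1 - (v i - w i) ^ (card (UNIV :: 'a set) - 1))"
    by simp
qed

lemma point_indicator_eq:
  "finite S \<Longrightarrow> point_indicator S w v = (if \<forall>i\<in>S. v i = w i then 1 else 0)"
  unfolding point_indicator_def field_power_card_minus_one by (auto simp: prod_zero_iff)

text \<open>The trace of h under the Galois group acting on functions; frob_vec q (m - k) is the
  inverse of frob_vec q k.\<close>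

definition frob_trace :: "nat \<Rightarrow> nat \<Rightarrow> ((nat \<Rightarrow> 'a::{field,finite}) \<Rightarrow> 'a) \<Rightarrow> (nat \<Rightarrow> 'a) \<Rightarrow> 'a" where
  "frob_trace q m h v = (\<Sum>k<m. frob q k (h (frob_vec q (m - k) v)))"

context galois_field
begin

lemma fq_poly_frob_vec: "fq_poly q S f \<Longrightarrow> f (frob_vec q k v) = frob q k (f (v::nat \<Rightarrow> 'a))"
  by (induction rule: fq_poly.induct) (simp_all add: frob_Fq frob_vec_apply frob_add frob_mult)

lemma fq_poly_uminus: "fq_poly q S f \<Longrightarrow> fq_poly q S (\<lambda>v. - (f v :: 'a))"
  using fq_poly.mult[OF fq_poly.const[OF Fq_minus_one]] by fastforce

lemma trace_in_Fq: "(\<Sum>k<m. frob q k (c::'a)) \<in> Fq q"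
proof -
  have "(\<Sum>k<Suc m. frob q k c) = frob q 0 c + (\<Sum>k<m. frob q (Suc k) c)"
    by (rule sum.lessThan_Suc_shift)
  moreover have "(\<Sum>k<Suc m. frob q k c) = (\<Sum>k<m. frob q k c) + frob q m c"
    by (rule sum.lessThan_Suc)
  ultimately have "(\<Sum>k<m. frob q (Suc k) c) = (\<Sum>k<m. frob q k c)"
    by (simp add: frob_degree)
  then show ?thesis
    by (simp add: Fq_iff_frob frob_sum frob_frob)
qed

lemma fq_poly_frob_trace: "fq_span q S h \<Longrightarrow> fq_poly q S (frob_trace q m (h :: (nat \<Rightarrow> 'a) \<Rightarrow> 'a))"
proof (induction rule: fq_span.induct)
  case (scale g c)
  have "frob q k (g (frob_vec q (m - k) v)) = g v" if "k < m" for k v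
    using that by (simp add: fq_poly_frob_vec[OF scale] frob_frob frob_degree)
  then have "frob_trace q m (\<lambda>v. c * g v) = (\<lambda>v. (\<Sum>k<m. frob q k c) * g v)"
    by (simp add: frob_trace_def frob_mult sum_distrib_right fun_eq_iff)
  then show ?case
    using fq_poly.mult[OF fq_poly.const[OF trace_in_Fq] scale] by simp
next
  case (add h1 h2)
  then show ?case
    using fq_poly.add[OF add.IH]
    by (simp add: frob_trace_def frob_add sum.distrib)
qed

section \<open>Tame maps\<close>

lemma involution_in_affine_maps:
  assumes \<sigma>: "\<forall>i<n. \<sigma> i < n \<and> \<sigma> (\<sigma> i) = i"
  shows "(\<lambda>v i. if i < n then v (\<sigma> i) else 0) \<in> (affine_maps q n :: ((nat \<Rightarrow> 'a) \<Rightarrow> _) set)"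
proof -
  define A where "A i k = (if \<sigma> i = k then 1 else (0::'a))" for i k
  have A_sum: "(\<Sum>k<n. A i k * g k) = g (\<sigma> i)" if "i < n" for i and g :: "nat \<Rightarrow> 'a"
  proof -
    have "(\<Sum>k<n. A i k * g k) = (\<Sum>k<n. if \<sigma> i = k then g k else 0)"
      by (rule sum.cong) (simp_all add: A_def)
    then show ?thesis
      using that \<sigma> by (simp add: sum.delta)
  qed
  have "\<forall>i<n. \<forall>l<n. (\<Sum>k<n. A i k * A k l) = (if i = l then 1 else 0)"
    using \<sigma> by (simp add: A_sum) (simp add: A_def)
  moreover have "(\<lambda>v i. if i < n then v (\<sigma> i) else 0) =
      (\<lambda>v i. if i < n then (\<Sum>k<n. A i k * v k) + 0 else (0::'a))"
    by (simp add: A_sum fun_eq_iff)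
  ultimately show ?thesis
    unfolding affine_maps_def by (intro CollectI exI[of _ A] exI[of _ "\<lambda>_. 0"]) (simp add: A_def)
qed

lemma tame_identity_on_points: "\<exists>F\<in>tame q n. \<forall>v\<in>points n. F v = (v::nat \<Rightarrow> 'a)"
proof (intro bexI[of _ "\<lambda>v i. if i < n then v i else 0"] ballI)
  fix v :: "nat \<Rightarrow> 'a"
  assume "v \<in> points n"
  then show "(\<lambda>i. if i < n then v i else 0) = v"
    by (auto simp: points_def fun_eq_iff)
next
  show "(\<lambda>v i. if i < n then v i else (0::'a)) \<in> tame q n"
    using tame.aff[OF involution_in_affine_maps[of n "\<lambda>i. i"]] by simp
qed

end

definition elementary :: "nat \<Rightarrow> ((nat \<Rightarrow> 'a::plus) \<Rightarrow> 'a) \<Rightarrow> (nat \<Rightarrow> 'a) \<Rightarrow> (nat \<Rightarrow> 'a)" where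
  "elementary j f v = v(j := v j + f v)"

lemma elementary_uminus_elementary:
  "fq_poly q ({..<n} - {j}) f \<Longrightarrow> elementary j (\<lambda>v. - f v) (elementary j f v) = v"
  using fq_poly_cong[of q "{..<n} - {j}" f "elementary j f v" v]
  by (auto simp: elementary_def fun_eq_iff)

lemma elementary_points: "j < n \<Longrightarrow> v \<in> points n \<Longrightarrow> elementary j f v \<in> points n"
  by (simp add: elementary_def points_def)

context galois_field
begin

lemma elementary_0_in_triangular_maps:
  assumes f: "fq_poly q {1..<n} (f :: (nat \<Rightarrow> 'a) \<Rightarrow> 'a)"
  shows "(\<lambda>v i. if i < n then 1 * v i + (if i = 0 then f v else 0) else 0) \<in> triangular_maps q n"
proof -
  have "fq_poly q {i+1..<n} (\<lambda>v. if i = 0 then f v else (0::'a))" for i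
    using f by (cases "i = 0") (simp_all add: fq_poly.const)
  then show ?thesis
    unfolding triangular_maps_def
    by (intro CollectI exI[of _ "\<lambda>_. 1"] exI[of _ "\<lambda>i v. if i = 0 then f v else 0"]) simp
qed

text \<open>Conjugate the triangular map adding g to X_0 by the transposition of X_0 and X_j.\<close>

lemma elementary_tame:
  assumes j: "j < n" and f: "fq_poly q ({..<n} - {j}) f"
  shows "\<exists>F\<in>tame q n. \<forall>v\<in>points n. F v = elementary j f (v :: nat \<Rightarrow> 'a)"
proof -
  define \<sigma> where "\<sigma> = id(0 := j, j := 0)"
  have \<sigma>: "\<forall>i<n. \<sigma> i < n \<and> \<sigma> (\<sigma> i) = i"
    using j by (simp add: \<sigma>_def)
  define P where "P v i = (if i < n then v (\<sigma> i) else (0::'a))" for v i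
  define g where "g v = f (v \<circ> \<sigma>)" for v
  define T where "T v i = (if i < n then 1 * v i + (if i = 0 then g v else 0) else 0)" for v i
  have "fq_poly q {1..<n} g"
    unfolding g_def by (rule fq_poly_rename[OF f]) (use j in \<open>auto simp: \<sigma>_def\<close>)
  then have "T \<in> tame q n"
    unfolding T_def by (intro tame.tri elementary_0_in_triangular_maps)
  moreover have "P \<in> tame q n"
    unfolding P_def by (intro tame.aff involution_in_affine_maps[OF \<sigma>])
  moreover have "(P \<circ> T \<circ> P) v = elementary j f v" if v: "v \<in> points n" for v
  proof
    fix i
    have "g (P v) = f v"
      unfolding g_def by (rule fq_poly_cong[OF f]) (use \<sigma> in \<open>simp add: P_def\<close>)
    show "(P \<circ> T \<circ> P) v i = elementary j f v i"
    proof (cases "i < n")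
      case True
      moreover have "\<sigma> i = 0 \<longleftrightarrow> i = j"
        by (auto simp: \<sigma>_def)
      ultimately show ?thesis
        using \<sigma> \<open>g (P v) = f v\<close> by (simp add: P_def T_def elementary_def)
    next
      case False
      then show ?thesis
        using v j by (simp add: P_def elementary_def points_def)
    qed
  qed
  ultimately show ?thesis
    by (meson tame.comp)
qed

lemma affine_map_frob_vec:
  assumes "F \<in> affine_maps q n"
  shows "F (frob_vec q k v) = frob_vec q k (F (v :: nat \<Rightarrow> 'a))"
proof -
  obtain A b where A: "\<forall>i<n. \<forall>j<n. A i j \<in> Fq q" and b: "\<forall>i<n. b i \<in> Fq q"
    and F: "F = (\<lambda>v i. if i < n then (\<Sum>j<n. A i j * v j) + b i else 0)"
    using assms unfolding affine_maps_def by blast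
  have "frob q k ((\<Sum>j<n. A i j * v j) + b i) = (\<Sum>j<n. A i j * frob q k (v j)) + b i" if "i < n" for i
    using that A b by (simp add: frob_add frob_sum frob_mult frob_Fq)
  then show ?thesis
    by (simp add: F frob_vec_apply fun_eq_iff)
qed

lemma triangular_map_frob_vec:
  assumes "F \<in> triangular_maps q n"
  shows "F (frob_vec q k v) = frob_vec q k (F (v :: nat \<Rightarrow> 'a))"
proof -
  obtain a f where af: "\<forall>i<n. a i \<in> Fq q \<and> fq_poly q {i+1..<n} (f i)"
    and F: "F = (\<lambda>v i. if i < n then a i * v i + f i v else 0)"
    using assms unfolding triangular_maps_def by blast
  have "frob q k (a i * v i + f i v) = a i * frob q k (v i) + f i (frob_vec q k v)" if "i < n" for i
  proof -
    have "f i (frob_vec q k v) = frob q k (f i v)"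
      using af that fq_poly_frob_vec by blast
    then show ?thesis
      using af that by (simp add: frob_add frob_mult frob_Fq)
  qed
  then show ?thesis
    by (simp add: F frob_vec_apply fun_eq_iff)
qed

lemma tame_frob_vec: "F \<in> tame q n \<Longrightarrow> F (frob_vec q k v) = frob_vec q k (F (v :: nat \<Rightarrow> 'a))"
  by (induction arbitrary: v rule: tame.induct)
    (simp_all add: affine_map_frob_vec triangular_map_frob_vec)

lemma tame_image_orbit: "F \<in> tame q n \<Longrightarrow> F ` orbit q m v = orbit q m (F (v :: nat \<Rightarrow> 'a))"
  by (simp add: orbit_eq_image image_image tame_frob_vec)

end

section \<open>Elementary moves on pairs of points\<close>

definition elem_move :: "nat \<Rightarrow> nat \<Rightarrow> (nat \<Rightarrow> 'a::{field,finite}) \<times> (nat \<Rightarrow> 'a) \<Rightarrow> (nat \<Rightarrow> 'a) \<times> (nat \<Rightarrow> 'a) \<Rightarrow> bool"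
  where "elem_move q n p p' \<longleftrightarrow> (\<exists>j f. j < n \<and> fq_poly q ({..<n} - {j}) f \<and>
    p' = map_prod (elementary j f) (elementary j f) p)"

abbreviation elem_moves :: "nat \<Rightarrow> nat \<Rightarrow> (nat \<Rightarrow> 'a::{field,finite}) \<times> (nat \<Rightarrow> 'a) \<Rightarrow> (nat \<Rightarrow> 'a) \<times> (nat \<Rightarrow> 'a) \<Rightarrow> bool"
  where "elem_moves q n \<equiv> (elem_move q n)\<^sup>*\<^sup>*"

lemma elem_move_elementary:
  "j < n \<Longrightarrow> fq_poly q ({..<n} - {j}) f \<Longrightarrow>
    elem_move q n (x, y) (elementary j f x, elementary j f (y :: nat \<Rightarrow> 'a::{field,finite}))"
  unfolding elem_move_def by auto

lemma elem_move_swap: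
  assumes "elem_move q n p p'"
  shows "elem_move q n (prod.swap p) (prod.swap p')"
proof -
  obtain j f where "j < n" "fq_poly q ({..<n} - {j}) f" "p' = map_prod (elementary j f) (elementary j f) p"
    using assms unfolding elem_move_def by blast
  then show ?thesis
    unfolding elem_move_def by (intro exI[of _ j] exI[of _ f]) (cases p, simp)
qed

lemma elem_moves_swap: "elem_moves q n p p' \<Longrightarrow> elem_moves q n (prod.swap p) (prod.swap p')"
  by (induction rule: rtranclp_induct) (auto intro: rtranclp.rtrancl_into_rtrancl elem_move_swap)

context galois_field
begin

lemma symp_elem_move: "symp (elem_move q n :: (nat \<Rightarrow> 'a) \<times> _ \<Rightarrow> _)"
proof (rule sympI)
  fix p p' :: "(nat \<Rightarrow> 'a) \<times> (nat \<Rightarrow> 'a)"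
  assume "elem_move q n p p'"
  then obtain j f where j: "j < n" and f: "fq_poly q ({..<n} - {j}) f"
    and p': "p' = map_prod (elementary j f) (elementary j f) p"
    unfolding elem_move_def by blast
  have "p = map_prod (elementary j (\<lambda>v. - f v)) (elementary j (\<lambda>v. - f v)) p'"
    using p' by (cases p) (simp add: elementary_uminus_elementary[OF f])
  then show "elem_move q n p' p"
    unfolding elem_move_def using j fq_poly_uminus[OF f] by blast
qed

lemma elem_moves_sym: "elem_moves q n p p' \<Longrightarrow> elem_moves q n p' (p :: (nat \<Rightarrow> 'a) \<times> _)"
  using symp_rtranclp[OF symp_elem_move] by (blast dest: sympD)

lemma elem_moves_tame:
  assumes "elem_moves q n (x, y) (x', y')" and "x \<in> points n" and "y \<in> points n"
  shows "\<exists>F\<in>tame q n. F x = x' \<and> F y = (y' :: nat \<Rightarrow> 'a)"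
proof -
  have "\<exists>F\<in>tame q n. F x = fst p \<and> F y = snd p \<and> fst p \<in> points n \<and> snd p \<in> points n"
    if "elem_moves q n (x, y) p" for p
    using that
  proof (induction rule: rtranclp_induct)
    case base
    then show ?case
      using tame_identity_on_points[of n] assms(2,3) by auto
  next
    case (step p p')
    then obtain F where F: "F \<in> tame q n" "F x = fst p" "F y = snd p"
      and p: "fst p \<in> points n" "snd p \<in> points n"
      by blast
    obtain j f where j: "j < n" and f: "fq_poly q ({..<n} - {j}) f"
      and p': "p' = map_prod (elementary j f) (elementary j f) p"
      using step.hyps(2) unfolding elem_move_def by blast
    obtain G where G: "G \<in> tame q n" "\<forall>v\<in>points n. G v = elementary j f v"
      using elementary_tame[OF j f] by blast
    obtain a b where ab: "p = (a, b)"
      by (cases p)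
    have "G \<circ> F \<in> tame q n"
      using tame.comp[OF G(1) F(1)] .
    moreover have "(G \<circ> F) x = fst p'" "(G \<circ> F) y = snd p'"
      using F(2,3) G(2) p p' ab by simp_all
    moreover have "fst p' \<in> points n" "snd p' \<in> points n"
      using p p' ab elementary_points[OF j] by simp_all
    ultimately show ?case
      by blast
  qed
  from this[OF assms(1)] show ?thesis
    by auto
qed

end

section \<open>Separated pairs\<close>

definition agree_on :: "nat set \<Rightarrow> (nat \<Rightarrow> 'a) \<Rightarrow> (nat \<Rightarrow> 'a) \<Rightarrow> bool" where
  "agree_on J v w \<longleftrightarrow> (\<forall>i\<in>J. v i = w i)"

lemma points_agree_on_eq:
  assumes "v \<in> points n" "w \<in> points n" "agree_on {..<n} v w"
  shows "v = w"
proof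
  fix i
  show "v i = w i"
    using assms by (cases "i < n") (simp_all add: points_def agree_on_def)
qed

definition frob_regular_on :: "nat \<Rightarrow> nat \<Rightarrow> nat set \<Rightarrow> (nat \<Rightarrow> 'a::{field,finite}) \<Rightarrow> bool" where
  "frob_regular_on q m J v \<longleftrightarrow> (\<forall>k. 0 < k \<and> k < m \<longrightarrow> \<not> agree_on J (frob_vec q k v) v)"

definition frob_conj_on :: "nat \<Rightarrow> nat set \<Rightarrow> (nat \<Rightarrow> 'a::{field,finite}) \<Rightarrow> (nat \<Rightarrow> 'a) \<Rightarrow> bool" where
  "frob_conj_on q J v w \<longleftrightarrow> (\<exists>k. agree_on J (frob_vec q k v) w)"

text \<open>If x is separated from y on J, the orbit interpolant of x on the J-coordinates vanishes
  at y, so any coordinate of x outside J can be changed while y stays fixed.\<close>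

definition separated_on :: "nat \<Rightarrow> nat \<Rightarrow> nat set \<Rightarrow> (nat \<Rightarrow> 'a::{field,finite}) \<Rightarrow> (nat \<Rightarrow> 'a) \<Rightarrow> bool"
  where "separated_on q m J x y \<longleftrightarrow> frob_regular_on q m J x \<and> \<not> frob_conj_on q J y x"

definition orbit_interpolant ::
    "nat \<Rightarrow> nat \<Rightarrow> nat set \<Rightarrow> (nat \<Rightarrow> 'a::{field,finite}) \<Rightarrow> 'a \<Rightarrow> (nat \<Rightarrow> 'a) \<Rightarrow> 'a" where
  "orbit_interpolant q m S w c = frob_trace q m (\<lambda>v. c * point_indicator S w v)"

lemma frob_conj_on_mono: "frob_conj_on q J v w \<Longrightarrow> I \<subseteq> J \<Longrightarrow> frob_conj_on q I v w"
  by (auto simp: frob_conj_on_def agree_on_def)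

lemma separated_on_cong: "agree_on J x' x \<Longrightarrow> separated_on q m J x y \<Longrightarrow> separated_on q m J x' y"
  by (simp add: separated_on_def frob_regular_on_def frob_conj_on_def agree_on_def frob_vec_def)

context galois_field
begin

lemma agree_on_frob_vec_iff:
  "agree_on S (frob_vec q k v) (frob_vec q k w) \<longleftrightarrow> agree_on S v (w::nat \<Rightarrow> 'a)"
  by (auto simp: agree_on_def frob_vec_apply intro: frob_inj)

lemma frob_conj_on_sym: "frob_conj_on q J y x \<Longrightarrow> frob_conj_on q J x (y::nat \<Rightarrow> 'a)"
proof -
  assume "frob_conj_on q J y x"
  then obtain k where "agree_on J (frob_vec q k y) x"
    by (auto simp: frob_conj_on_def)
  then have "agree_on J (frob_vec q (m * k - k) (frob_vec q k y)) (frob_vec q (m * k - k) x)"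
    by (simp add: agree_on_frob_vec_iff)
  moreover have "m * k - k + k = m * k"
    using degree_pos by (simp add: le_add_diff_inverse2)
  ultimately have "agree_on J y (frob_vec q (m * k - k) x)"
    by (simp add: frob_vec_frob_vec frob_vec_mod[of "m * k"])
  then show ?thesis
    by (auto simp: frob_conj_on_def agree_on_def)
qed

lemma fq_poly_orbit_interpolant: "fq_poly q S (orbit_interpolant q m S w (c::'a))"
  unfolding orbit_interpolant_def
  by (intro fq_poly_frob_trace fq_span_scale fq_span_point_indicator)

lemma orbit_interpolant_eq:
  "finite S \<Longrightarrow> orbit_interpolant q m S w c v =
    (\<Sum>k<m. if agree_on S (frob_vec q (m - k) v) w then frob q k c else (0::'a))"
proof -
  assume fin: "finite S"
  have "frob q k (c * point_indicator S w u) = (if agree_on S u w then frob q k c else 0)" for k u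
    by (cases "agree_on S u w") (auto simp: point_indicator_eq[OF fin] frob_mult agree_on_def)
  then show ?thesis
    by (simp add: orbit_interpolant_def frob_trace_def)
qed

lemma elem_move_update:
  assumes j: "j < n" and J: "J \<subseteq> {..<n} - {j}" and sep: "separated_on q m J x y"
  shows "elem_move q n (x, y) (x(j := z), y :: nat \<Rightarrow> 'a)"
proof -
  define f where "f = orbit_interpolant q m J x (z - x j)"
  have fin: "finite J"
    using J finite_subset by blast
  have f: "fq_poly q ({..<n} - {j}) f"
    unfolding f_def using J by (intro fq_poly_mono[OF fq_poly_orbit_interpolant])
  have "agree_on J (frob_vec q (m - k) x) x \<longleftrightarrow> k = 0" if "k < m" for k
  proof (cases "k = 0")
    case True
    then show ?thesis
      by (simp add: frob_vec_degree agree_on_def)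
  next
    case False
    then have "0 < m - k" "m - k < m"
      using that by auto
    then show ?thesis
      using sep False by (simp add: separated_on_def frob_regular_on_def)
  qed
  then have "f x = z - x j"
    using degree_pos by (simp add: f_def orbit_interpolant_eq[OF fin] sum.delta cong: if_cong)
  moreover have "f y = 0"
    using sep by (simp add: f_def orbit_interpolant_eq[OF fin] separated_on_def frob_conj_on_def)
  ultimately show ?thesis
    unfolding elem_move_def using j f
    by (intro exI[of _ j] exI[of _ f]) (simp add: elementary_def)
qed

lemma elem_moves_update_set:
  assumes "finite D" "D \<subseteq> {..<n} - J" "J \<subseteq> {..<n}" "separated_on q m J x y" "\<forall>i. i \<notin> D \<longrightarrow> x' i = x i"
  shows "elem_moves q n (x, y) (x', y :: nat \<Rightarrow> 'a)"
  using assms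
proof (induction D arbitrary: x rule: finite_induct)
  case empty
  then show ?case
    by (simp add: fun_eq_iff)
next
  case (insert i D)
  define x1 where "x1 = x(i := x' i)"
  have "elem_move q n (x, y) (x1, y)"
    unfolding x1_def using insert.prems by (intro elem_move_update) auto
  moreover have "elem_moves q n (x1, y) (x', y)"
  proof (rule insert.IH)
    show "separated_on q m J x1 y"
      using insert.prems by (intro separated_on_cong[of J x1 x]) (auto simp: x1_def agree_on_def)
  qed (use insert.prems in \<open>auto simp: x1_def\<close>)
  ultimately show ?case
    by (rule converse_rtranclp_into_rtranclp)
qed

lemma elem_moves_reassign:
  assumes "separated_on q m J x y" "J \<subseteq> {..<n}" "x \<in> points n" "x' \<in> points n" "agree_on J x' x"
  shows "elem_moves q n (x, y) (x', y :: nat \<Rightarrow> 'a)"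
  using assms
  by (intro elem_moves_update_set[where D = "{..<n} - J"])
    (auto simp: points_def agree_on_def not_less)

lemma elementary_frob_vec:
  "fq_poly q S f \<Longrightarrow> elementary j f (frob_vec q k v) = frob_vec q k (elementary j f (v::nat \<Rightarrow> 'a))"
  by (auto simp: elementary_def fun_eq_iff frob_vec_apply frob_add fq_poly_frob_vec)

lemma agree_on_elementary_iff:
  assumes f: "fq_poly q ({..<n} - {j}) f"
  shows "agree_on {..<n} (elementary j f v) (elementary j f w) \<longleftrightarrow> agree_on {..<n} v (w::nat \<Rightarrow> 'a)"
proof
  assume agree: "agree_on {..<n} (elementary j f v) (elementary j f w)"
  have "f (elementary j f u) = f u" for u
    by (rule fq_poly_cong[OF f]) (simp add: elementary_def)
  moreover have "f (elementary j f v) = f (elementary j f w)"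
    using agree by (intro fq_poly_cong[OF f]) (simp add: agree_on_def)
  ultimately have "f v = f w"
    by simp
  then show "agree_on {..<n} v w"
    using agree unfolding agree_on_def elementary_def by (metis add_right_cancel fun_upd_apply)
next
  assume agree: "agree_on {..<n} v w"
  then have "f v = f w"
    by (intro fq_poly_cong[OF f]) (simp add: agree_on_def)
  then show "agree_on {..<n} (elementary j f v) (elementary j f w)"
    using agree by (simp add: agree_on_def elementary_def)
qed

lemma regular_on_elementary_iff:
  "fq_poly q ({..<n} - {j}) f \<Longrightarrow>
    frob_regular_on q m {..<n} (elementary j f v) \<longleftrightarrow> frob_regular_on q m {..<n} (v::nat \<Rightarrow> 'a)"
  by (simp add: frob_regular_on_def agree_on_elementary_iff flip: elementary_frob_vec)

lemma conj_on_elementary_iff: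
  "fq_poly q ({..<n} - {j}) f \<Longrightarrow>
    frob_conj_on q {..<n} (elementary j f v) (elementary j f w) \<longleftrightarrow> frob_conj_on q {..<n} v (w::nat \<Rightarrow> 'a)"
  by (simp add: frob_conj_on_def agree_on_elementary_iff flip: elementary_frob_vec)

end

section \<open>Primitive coordinates\<close>

definition frob_primitive :: "nat \<Rightarrow> nat \<Rightarrow> 'a::{field,finite} \<Rightarrow> bool" where
  "frob_primitive q m z \<longleftrightarrow> (\<forall>k. 0 < k \<and> k < m \<longrightarrow> frob q k z \<noteq> z)"

definition partial_trace :: "nat \<Rightarrow> nat \<Rightarrow> nat \<Rightarrow> 'a::{field,finite} \<Rightarrow> 'a" where
  "partial_trace q m d c = (\<Sum>l<m div d. frob q (l * d) c)"

context galois_field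
begin

lemma card_frob_fixed_le:
  assumes "0 < g"
  shows "card {z::'a. frob q g z = z} \<le> q ^ g"
proof -
  define p :: "'a poly" where "p = monom 1 (q ^ g) - monom 1 1"
  have "q \<le> q ^ g"
    using assms base_ge_2 by (simp add: self_le_power)
  then have "coeff p (q ^ g) = 1"
    using base_ge_2 by (simp add: p_def coeff_monom)
  then have "p \<noteq> 0"
    by auto
  moreover have "degree p \<le> q ^ g"
    unfolding p_def using \<open>q \<le> q ^ g\<close> base_ge_2
    by (intro degree_diff_le order.trans[OF degree_monom_le]) simp_all
  moreover have "{z::'a. frob q g z = z} = {z. poly p z = 0}"
    by (auto simp: p_def poly_monom frob_def)
  ultimately show ?thesis
    using card_poly_roots_bound by fastforce
qed

lemma frob_partial_trace:
  assumes "0 < d" "d dvd m"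
  shows "frob q d (partial_trace q m d c) = partial_trace q m d (c::'a)"
proof -
  have M: "m div d * d = m"
    using assms by simp
  have "(\<Sum>l<Suc (m div d). frob q (l * d) c) = frob q (0 * d) c + (\<Sum>l<m div d. frob q (Suc l * d) c)"
    by (rule sum.lessThan_Suc_shift)
  moreover have "(\<Sum>l<Suc (m div d). frob q (l * d) c) = (\<Sum>l<m div d. frob q (l * d) c) + frob q (m div d * d) c"
    by (rule sum.lessThan_Suc)
  ultimately have "(\<Sum>l<m div d. frob q (Suc l * d) c) = (\<Sum>l<m div d. frob q (l * d) c)"
    using M by (simp add: frob_degree)
  then show ?thesis
    by (simp add: partial_trace_def frob_sum frob_frob add.commute)
qed

lemma card_partial_trace_fiber_le:
  assumes d: "0 < d" "d dvd m"
  shows "card {c::'a. partial_trace q m d c = b} \<le> q ^ (m - d)"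
proof -
  define M where "M = m div d"
  have M: "M \<ge> 1" "M * d = m"
    using d degree_pos by (auto simp: M_def elim!: dvdE)
  define p :: "'a poly" where "p = (\<Sum>l<M. monom 1 (q ^ (l * d))) - [:b:]"
  have "q ^ (l * d) = 1 \<longleftrightarrow> l = 0" for l
    using base_ge_2 d by simp
  then have "coeff p 1 = (\<Sum>l<M. if l = 0 then 1 else 0)"
    by (simp add: p_def coeff_sum coeff_monom)
  then have "p \<noteq> 0"
    using M by (auto simp: sum.delta)
  moreover have "degree p \<le> q ^ (m - d)"
  proof -
    have "q ^ (l * d) \<le> q ^ (m - d)" if "l < M" for l
    proof -
      have "l * d \<le> (M - 1) * d"
        using that by (intro mult_le_mono1) linarith
      also have "\<dots> = m - d"
        using M by (simp add: diff_mult_distrib)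
      finally show ?thesis
        using base_ge_2 by (simp add: power_increasing)
    qed
    then show ?thesis
      unfolding p_def
      by (intro degree_diff_le degree_sum_le order.trans[OF degree_monom_le]) simp_all
  qed
  moreover have "{c::'a. partial_trace q m d c = b} = {c. poly p c = 0}"
    by (auto simp: p_def partial_trace_def M_def poly_sum poly_monom frob_def)
  ultimately show ?thesis
    using card_poly_roots_bound by fastforce
qed

lemma gcd_mult_index_le:
  assumes d: "0 < d" "d dvd m" and a: "\<forall>e. d dvd e \<longrightarrow> frob q e a = a \<longrightarrow> m dvd e"
    and g: "0 < g" "g dvd m"
    and fixed: "frob q g (a + partial_trace q m d c) = a + partial_trace q m d (c::'a)"
  shows "gcd g d * (m div g) \<le> d"
proof -
  have "frob q (lcm g d) (a + partial_trace q m d c) = a + partial_trace q m d c"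
    using frob_fixed_dvd[OF fixed] by simp
  moreover have "frob q (lcm g d) (partial_trace q m d c) = partial_trace q m d c"
    using frob_fixed_dvd[OF frob_partial_trace[OF d]] by simp
  ultimately have "frob q (lcm g d) a = a"
    by (simp add: frob_add)
  then have "m \<le> lcm g d"
    using a g d by (simp add: dvd_imp_le lcm_pos_nat)
  then have "gcd g d * m \<le> g * d"
    by (metis prod_gcd_lcm_nat mult_le_mono2)
  also have "gcd g d * m = g * (gcd g d * (m div g))"
    using g by (metis dvd_mult_div_cancel mult.left_commute)
  finally show ?thesis
    using g by simp
qed

lemma nonprimitive_translates_subset:
  assumes d: "0 < d" "d dvd m" and a: "\<forall>e. d dvd e \<longrightarrow> frob q e a = a \<longrightarrow> m dvd e"
  shows "{c. \<not> frob_primitive q m (a + partial_trace q m d c)} \<subseteq>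
    (\<Union>t\<in>{2..d}. {c::'a. t dvd m \<and>
      frob q (m div t) (a + partial_trace q m d c) = a + partial_trace q m d c})"
proof
  fix c assume "c \<in> {c. \<not> frob_primitive q m (a + partial_trace q m d c)}"
  then obtain e where e: "0 < e" "e < m" "frob q e (a + partial_trace q m d c) = a + partial_trace q m d c"
    by (auto simp: frob_primitive_def)
  define g where "g = gcd e m"
  define t where "t = m div g"
  have fixed: "frob q g (a + partial_trace q m d c) = a + partial_trace q m d c"
    unfolding g_def by (rule frob_fixed_gcd[OF e(3) frob_degree])
  have g: "0 < g" "g dvd m" "g \<le> e"
    using e by (simp_all add: g_def gcd_le1_nat)
  then have mt: "m = g * t"
    by (simp add: t_def)
  have "t \<noteq> 0"
    using mt degree_pos by auto
  moreover have "t \<noteq> 1"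
    using mt g(3) e(2) by auto
  ultimately have "t \<ge> 2"
    by linarith
  have "gcd g d * t \<le> d"
    using gcd_mult_index_le[OF d a g(1,2) fixed] by (simp add: t_def)
  moreover have "1 * t \<le> gcd g d * t"
    using d by (intro mult_le_mono1) (simp add: Suc_le_eq)
  ultimately have "t \<le> d"
    by linarith
  moreover have "t dvd m" "m div t = g"
    using mt \<open>t \<ge> 2\<close> by simp_all
  ultimately show "c \<in> (\<Union>t\<in>{2..d}. {c. t dvd m \<and>
      frob q (m div t) (a + partial_trace q m d c) = a + partial_trace q m d c})"
    using fixed \<open>t \<ge> 2\<close> by auto
qed

lemma card_image_partial_trace_fixed_le:
  assumes d: "0 < d" "d dvd m" and a: "\<forall>e. d dvd e \<longrightarrow> frob q e a = a \<longrightarrow> m dvd e"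
    and t: "2 \<le> t"
  shows "card (partial_trace q m d ` {c::'a. t dvd m \<and>
      frob q (m div t) (a + partial_trace q m d c) = a + partial_trace q m d c}) \<le> q ^ (d div 2)"
    (is "card (_ ` ?B) \<le> _")
proof (cases "?B = {}")
  case False
  then obtain c0 where c0: "c0 \<in> ?B"
    by blast
  define g where "g = m div t"
  define h where "h = gcd g d"
  have g: "0 < g" "g dvd m" "m div g = t"
    using c0 degree_pos by (auto simp: g_def elim!: dvdE)
  have "h * t \<le> d"
    using gcd_mult_index_le[OF d a g(1,2), of c0] c0 g by (simp add: h_def g_def)
  then have "h * 2 \<le> d"
    using t by (meson le_trans mult_le_mono2)
  then have "h \<le> d div 2"
    by linarith
  have "h > 0"
    using d by (simp add: h_def)
  have "partial_trace q m d ` ?B \<subseteq> (\<lambda>z. partial_trace q m d c0 - z) ` {z. frob q h z = z}"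
  proof
    fix k assume "k \<in> partial_trace q m d ` ?B"
    then obtain c where c: "c \<in> ?B" "k = partial_trace q m d c"
      by blast
    define z where "z = partial_trace q m d c0 - k"
    have z: "z = (a + partial_trace q m d c0) - (a + partial_trace q m d c)"
      by (simp add: z_def c)
    have "frob q g z = z"
      unfolding z frob_diff using c c0 by (simp add: g_def)
    moreover have "frob q d z = z"
      using c by (simp add: z_def frob_diff frob_partial_trace[OF d])
    ultimately have "frob q h z = z"
      unfolding h_def by (rule frob_fixed_gcd)
    then show "k \<in> (\<lambda>z. partial_trace q m d c0 - z) ` {z. frob q h z = z}"
      by (intro image_eqI[of _ _ z]) (simp_all add: z_def)
  qed
  then have "card (partial_trace q m d ` ?B) \<le>
      card ((\<lambda>z. partial_trace q m d c0 - z) ` {z::'a. frob q h z = z})"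
    by (rule card_mono[rotated]) simp
  also have "\<dots> \<le> card {z::'a. frob q h z = z}"
    by (rule card_image_le) simp
  also have "\<dots> \<le> q ^ h"
    by (rule card_frob_fixed_le[OF \<open>h > 0\<close>])
  also have "\<dots> \<le> q ^ (d div 2)"
    using \<open>h \<le> d div 2\<close> base_ge_2 by (simp add: power_increasing)
  finally show ?thesis .
next
  case True
  then show ?thesis
    by (metis card.empty image_empty le0)
qed

lemma card_fixed_translates_le:
  assumes d: "0 < d" "d dvd m" and a: "\<forall>e. d dvd e \<longrightarrow> frob q e a = a \<longrightarrow> m dvd e"
    and t: "2 \<le> t"
  shows "card {c::'a. t dvd m \<and> frob q (m div t) (a + partial_trace q m d c) = a + partial_trace q m d c}
    \<le> q ^ (d div 2) * q ^ (m - d)" (is "card ?B \<le> _")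
proof -
  let ?K = "partial_trace q m d ` ?B"
  have "card ?B \<le> card (\<Union>b\<in>?K. {c::'a. partial_trace q m d c = b})"
    by (intro card_mono) auto
  also have "\<dots> \<le> (\<Sum>b\<in>?K. card {c::'a. partial_trace q m d c = b})"
    by (rule card_UN_le) simp
  also have "\<dots> \<le> card ?K * q ^ (m - d)"
    using sum_bounded_above[of ?K "\<lambda>b. card {c::'a. partial_trace q m d c = b}"]
      card_partial_trace_fiber_le[OF d] by simp
  also have "\<dots> \<le> q ^ (d div 2) * q ^ (m - d)"
    using card_image_partial_trace_fixed_le[OF d a t] by simp
  finally show ?thesis .
qed

text \<open>If a + partial_trace c is not primitive, it is fixed by a power of the Frobenius of index
  t with 2 <= t <= d; the possible values of partial_trace c then lie in a coset of a subfield of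
  size at most q^(d div 2), and each value has at most q^(m - d) preimages.  This leaves fewer
  than q^m bad c.\<close>

lemma exists_primitive_translate:
  assumes d: "0 < d" "d dvd m" and a: "\<forall>e. d dvd e \<longrightarrow> frob q e a = a \<longrightarrow> m dvd e"
  shows "\<exists>c. frob_primitive q m (a + partial_trace q m d (c::'a))"
proof -
  let ?B = "\<lambda>t. {c::'a. t dvd m \<and> frob q (m div t) (a + partial_trace q m d c) = a + partial_trace q m d c}"
  have "card {c. \<not> frob_primitive q m (a + partial_trace q m d c)} \<le> card (\<Union>t\<in>{2..d}. ?B t)"
    using nonprimitive_translates_subset[OF d a] by (intro card_mono) auto
  also have "\<dots> \<le> (\<Sum>t\<in>{2..d}. card (?B t))"
    by (rule card_UN_le) simp
  also have "\<dots> \<le> (d - 1) * (q ^ (d div 2) * q ^ (m - d))"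
    using sum_bounded_above[of "{2..d}" "\<lambda>t. card (?B t)"] card_fixed_translates_le[OF d a]
    by simp
  also have "\<dots> < q ^ d * q ^ (m - d)"
    using pred_mult_power_half_less_power[OF base_ge_2, of d] base_ge_2 by simp
  also have "\<dots> = card (UNIV :: 'a set)"
    using d degree_pos card_field by (simp add: dvd_imp_le flip: power_add)
  finally have "{c. \<not> frob_primitive q m (a + partial_trace q m d c)} \<noteq> UNIV"
    by auto
  then show ?thesis
    by auto
qed

lemma agree_on_frob_vec_period:
  "\<exists>d>0. d dvd m \<and> (\<forall>k. agree_on S (frob_vec q k x) (x::nat \<Rightarrow> 'a) \<longleftrightarrow> d dvd k)"
proof -
  define P where "P k \<longleftrightarrow> agree_on S (frob_vec q k x) x" for k
  have add: "P (a + b)" if "P a" "P b" for a b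
    using that agree_on_frob_vec_iff[of S a "frob_vec q b x" x]
    by (simp add: P_def frob_vec_frob_vec agree_on_def)
  have diff: "P (a - b)" if "P a" "P b" "b \<le> a" for a b
    using that agree_on_frob_vec_iff[of S b "frob_vec q (a - b) x" x]
    by (simp add: P_def frob_vec_frob_vec agree_on_def)
  have "P m"
    by (simp add: P_def frob_vec_degree agree_on_def)
  define d where "d = (LEAST k. 0 < k \<and> P k)"
  have d: "0 < d" "P d"
    using LeastI[of "\<lambda>k. 0 < k \<and> P k" m] \<open>P m\<close> degree_pos by (simp_all add: d_def)
  have "P k \<longleftrightarrow> d dvd k" for k
  proof
    assume "P k"
    then have "P (gcd d k)"
      using add_diff_closed_gcd[of P, OF add diff d(2)] by blast
    moreover have "0 < gcd d k" "gcd d k \<le> d"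
      using d by (simp_all add: gcd_le1_nat)
    ultimately have "gcd d k = d"
      unfolding d_def by (metis (no_types, lifting) Least_le antisym d_def)
    then show "d dvd k"
      by (metis gcd_nat.absorb_iff1)
  next
    assume "d dvd k"
    then show "P k"
      using add_diff_closed_mult[of P, OF add diff d(2)] by blast
  qed
  then show ?thesis
    using d(1) \<open>P m\<close> unfolding P_def by blast
qed

lemma partial_trace_eq_sum_dvd:
  assumes d: "0 < d" "d dvd m"
  shows "partial_trace q m d c = (\<Sum>k<m. if d dvd k then frob q k c else (0::'a))"
proof -
  have "(\<Sum>k<m. if d dvd k then frob q k c else 0) = (\<Sum>k\<in>{k. k < m \<and> d dvd k}. frob q k c)"
    by (simp add: sum.inter_filter[symmetric] lessThan_def Collect_conj_eq)
  also have "\<dots> = partial_trace q m d c"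
    unfolding partial_trace_def
  proof (rule sum.reindex_bij_witness[of _ "\<lambda>l. l * d" "\<lambda>k. k div d"])
    fix l assume "l \<in> {..<m div d}"
    then have "l * d < m"
      using d by (metis dvd_div_mult_self lessThan_iff mult_less_mono1)
    then show "l * d \<in> {k. k < m \<and> d dvd k}"
      by simp
  next
    fix k assume "k \<in> {k. k < m \<and> d dvd k}"
    then show "k div d \<in> {..<m div d}"
      using d by (auto elim!: dvdE)
  qed (use d in auto)
  finally show ?thesis ..
qed

lemma exists_primitive_coordinate:
  assumes reg: "frob_regular_on q m {..<n} x" and j: "j < n"
  shows "\<exists>f. fq_poly q ({..<n} - {j}) f \<and> frob_primitive q m (x j + f (x::nat \<Rightarrow> 'a))"
proof -
  define S where "S = {..<n} - {j}"
  obtain d where d: "0 < d" "d dvd m" and period: "\<forall>k. agree_on S (frob_vec q k x) x \<longleftrightarrow> d dvd k"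
    using agree_on_frob_vec_period by blast
  have "m dvd e" if "d dvd e" "frob q e (x j) = x j" for e
  proof -
    have "agree_on {..<n} (frob_vec q e x) x"
      using period that j by (auto simp: S_def agree_on_def frob_vec_apply)
    then have "agree_on {..<n} (frob_vec q (e mod m) x) x"
      by (simp flip: frob_vec_mod)
    then have "e mod m = 0"
      using reg degree_pos by (auto simp: frob_regular_on_def)
    then show ?thesis
      by (simp add: dvd_eq_mod_eq_0)
  qed
  then obtain c where c: "frob_primitive q m (x j + partial_trace q m d c)"
    using exists_primitive_translate[OF d] by blast
  define f where "f = orbit_interpolant q m S x c"
  have "d dvd (m - k) \<longleftrightarrow> d dvd k" if "k < m" for k
    using that d(2) by (metis dvd_diff_nat diff_diff_cancel less_imp_le)
  then have "f x = partial_trace q m d c"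
    using period by (simp add: f_def orbit_interpolant_eq partial_trace_eq_sum_dvd[OF d] S_def)
  then show ?thesis
    using c fq_poly_orbit_interpolant[of S] by (intro exI[of _ f]) (simp add: f_def S_def)
qed

lemma frob_primitive_exp_mod_eq:
  assumes z: "frob_primitive q m z" and "frob q k1 w = z" "frob q k2 w = (z::'a)"
  shows "k1 mod m = k2 mod m"
proof -
  have "a = b" if "a \<le> b" "b < m" "frob q a w = z" "frob q b w = z" for a b
  proof (rule ccontr)
    assume "a \<noteq> b"
    then have "0 < b - a" "b - a < m"
      using that(1,2) by simp_all
    moreover have "frob q (b - a) z = z"
      using that by (metis frob_frob le_add_diff_inverse2)
    ultimately show False
      using z by (simp add: frob_primitive_def)
  qed
  moreover have "frob q (k1 mod m) w = z" "frob q (k2 mod m) w = z" "k1 mod m < m" "k2 mod m < m"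
    using assms degree_pos by (simp_all flip: frob_mod)
  ultimately show ?thesis
    by (metis nle_le)
qed

lemma frob_regular_on_primitive:
  "frob_primitive q m (x c) \<Longrightarrow> c \<in> J \<Longrightarrow> frob_regular_on q m J (x::nat \<Rightarrow> 'a)"
  by (auto simp: frob_primitive_def frob_regular_on_def agree_on_def frob_vec_apply)

lemma separated_on_pair:
  assumes "frob_primitive q m (x i)" and "\<forall>k. frob q k (y l) \<noteq> x l"
  shows "separated_on q m {i, l} x (y::nat \<Rightarrow> 'a)"
  using assms frob_regular_on_primitive[of x i]
  by (auto simp: separated_on_def frob_conj_on_def agree_on_def frob_vec_apply)

lemma frob_ne_of_bool_eq_0: "frob q k z \<noteq> of_bool (z = (0::'a))"
  using frob_inj[of k z 0] by auto

lemma separated_on_split: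
  assumes sep: "separated_on q m {a, b} x y" and c: "frob_primitive q m (x c)"
  shows "separated_on q m {a, c} x y \<or> separated_on q m {c, b} x (y::nat \<Rightarrow> 'a)"
proof (rule ccontr)
  assume "\<not> ?thesis"
  then have "frob_conj_on q {a, c} y x" "frob_conj_on q {c, b} y x"
    using frob_regular_on_primitive[of x c, OF c] by (auto simp: separated_on_def)
  then obtain k1 k2 where k1: "agree_on {a, c} (frob_vec q k1 y) x"
    and k2: "agree_on {c, b} (frob_vec q k2 y) x"
    by (auto simp: frob_conj_on_def)
  then have "k1 mod m = k2 mod m"
    using frob_primitive_exp_mod_eq[OF c] by (auto simp: agree_on_def frob_vec_apply)
  then have "frob_vec q k1 y = frob_vec q k2 y"
    by (metis frob_vec_mod)
  then have "frob_conj_on q {a, b} y x"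
    using k1 k2 by (auto simp: frob_conj_on_def agree_on_def)
  then show False
    using sep by (simp add: separated_on_def)
qed

lemma bigX_regular_on: "v \<in> bigX q m n \<Longrightarrow> frob_regular_on q m {..<n} (v::nat \<Rightarrow> 'a)"
proof -
  assume v: "v \<in> bigX q m n"
  then have "card ((\<lambda>k. frob_vec q k v) ` {..<m}) = card {..<m}"
    by (simp add: bigX_def orbit_eq_image)
  then have inj: "inj_on (\<lambda>k. frob_vec q k v) {..<m}"
    by (rule eq_card_imp_inj_on[OF finite_lessThan])
  show ?thesis
    unfolding frob_regular_on_def
  proof (intro allI impI notI)
    fix k
    assume k: "0 < k \<and> k < m" and "agree_on {..<n} (frob_vec q k v) v"
    then have "frob_vec q k v = v"
      using v by (intro points_agree_on_eq frob_vec_points) (simp_all add: bigX_def)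
    then have "k = 0"
      using inj_onD[OF inj, of k 0] k by simp
    with k show False
      by simp
  qed
qed

lemma orbit_ne_imp_not_conj_on:
  assumes "v \<in> points n" "w \<in> points n" "orbit q m v \<noteq> orbit q m w"
  shows "\<not> frob_conj_on q {..<n} w (v::nat \<Rightarrow> 'a)"
proof
  assume "frob_conj_on q {..<n} w v"
  then obtain k where "agree_on {..<n} (frob_vec q k w) v"
    by (auto simp: frob_conj_on_def)
  then have "frob_vec q k w = v"
    using assms by (intro points_agree_on_eq frob_vec_points)
  then show False
    using assms(3) orbit_frob_vec[of k w] by simp
qed

end

section \<open>Normal forms\<close>

text \<open>The value of_bool (z = 0) lies in F_q and differs from every Frobenius conjugate
  of z, which makes (normal_point alpha y, y) separated on {0, i} for i = 1, 2.\<close>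

definition normal_point :: "'a \<Rightarrow> (nat \<Rightarrow> 'a) \<Rightarrow> nat \<Rightarrow> 'a::zero_neq_one" where
  "normal_point \<alpha> y i = (if i = 0 then \<alpha> else if i \<in> {1, 2} then of_bool (y i = 0) else 0)"

definition std_point :: "'a \<Rightarrow> nat \<Rightarrow> 'a::zero_neq_one" where
  "std_point \<alpha> i = (if i = 0 then \<alpha> else 0)"

definition std_partner :: "'a \<Rightarrow> nat \<Rightarrow> 'a::zero_neq_one" where
  "std_partner \<alpha> i = (if i = 0 then \<alpha> else if i \<in> {1, 2} then 1 else 0)"

locale galois_space = galois_field q m field_type for q m and field_type :: "'a::{field,finite} itself" +
  fixes n :: nat
  assumes dim_ge_3: "3 \<le> n"
begin

lemma normal_point_points: "normal_point \<alpha> y \<in> points n"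
  using dim_ge_3 by (simp add: normal_point_def points_def)

lemma std_points: "std_point \<alpha> \<in> points n" "std_partner \<alpha> \<in> points n"
  using dim_ge_3 by (simp_all add: std_point_def std_partner_def points_def)

lemma elem_moves_normal_of_fst_eq:
  assumes \<alpha>: "frob_primitive q m \<alpha>" and x: "x \<in> points n" "x 0 = \<alpha>" and l: "l \<noteq> 0" "l < n"
    and sep: "separated_on q m {0, l} x y"
  shows "elem_moves q n (x, y) (normal_point \<alpha> y, y :: nat \<Rightarrow> 'a)"
proof -
  define k :: nat where "k = (if l = 1 then 2 else 1)"
  have k: "k \<in> {1, 2}" "k \<noteq> l"
    by (simp_all add: k_def)
  define x' where "x' = (normal_point \<alpha> y)(l := x l)"
  have "x' \<in> points n"
    using normal_point_points[of \<alpha> y] l by (simp add: x'_def points_def)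
  then have "elem_moves q n (x, y) (x', y)"
    using x l by (intro elem_moves_reassign[OF sep]) (auto simp: x'_def agree_on_def normal_point_def)
  moreover have "separated_on q m {0, k} x' y"
    using k l \<alpha> frob_ne_of_bool_eq_0 by (intro separated_on_pair) (auto simp: x'_def normal_point_def)
  then have "elem_moves q n (x', y) (normal_point \<alpha> y, y)"
    using k l dim_ge_3 \<open>x' \<in> points n\<close> normal_point_points
    by (intro elem_moves_reassign) (auto simp: x'_def agree_on_def)
  ultimately show ?thesis
    by (rule rtranclp_trans)
qed

lemma elem_moves_normal_of_nonzero_pair:
  assumes \<alpha>: "frob_primitive q m \<alpha>" and x: "x \<in> points n"
    and ab: "a < n" "b < n" "a \<noteq> 0" "b \<noteq> 0" and sep: "separated_on q m {a, b} x y"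
  shows "elem_moves q n (x, y) (normal_point \<alpha> y, y :: nat \<Rightarrow> 'a)"
proof -
  define x1 where "x1 = x(0 := \<alpha>)"
  have x1: "x1 \<in> points n" "x1 0 = \<alpha>"
    using x dim_ge_3 by (auto simp: x1_def points_def)
  have "elem_moves q n (x, y) (x1, y)"
    using ab x x1 by (intro elem_moves_reassign[OF sep]) (auto simp: agree_on_def x1_def)
  moreover have "separated_on q m {a, b} x1 y"
    using ab by (intro separated_on_cong[OF _ sep]) (auto simp: agree_on_def x1_def)
  then have "separated_on q m {0, a} x1 y \<or> separated_on q m {0, b} x1 y"
    using separated_on_split[of a b x1 y 0] \<alpha> x1 by (auto simp: insert_commute)
  then have "elem_moves q n (x1, y) (normal_point \<alpha> y, y)"
    using elem_moves_normal_of_fst_eq[OF \<alpha> x1] ab by blast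
  ultimately show ?thesis
    by (rule rtranclp_trans)
qed

lemma elem_moves_normal_of_pair:
  assumes \<alpha>: "frob_primitive q m \<alpha>" and x: "x \<in> points n"
    and ab: "a < n" "b < n" "a \<noteq> b" and sep: "separated_on q m {a, b} x y"
  shows "elem_moves q n (x, y) (normal_point \<alpha> y, y :: nat \<Rightarrow> 'a)"
proof (cases "a = 0 \<or> b = 0")
  case False
  then show ?thesis
    using elem_moves_normal_of_nonzero_pair[OF \<alpha> x] ab sep by blast
next
  case True
  then obtain b' where b': "b' < n" "b' \<noteq> 0" and sep0: "separated_on q m {0, b'} x y"
    using ab sep by (metis insert_commute)
  define l :: nat where "l = (if b' = 1 then 2 else 1)"
  have l: "l \<in> {1, 2}" "l \<noteq> b'"
    by (simp_all add: l_def)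
  then have "l < n" "l \<noteq> 0"
    using dim_ge_3 by auto
  define x2 where "x2 = x(l := \<alpha>)"
  have x2: "x2 \<in> points n"
    using x \<open>l < n\<close> by (auto simp: x2_def points_def)
  have to_x2: "elem_moves q n (x, y) (x2, y)"
    using b' l x x2 by (intro elem_moves_reassign[OF sep0]) (auto simp: agree_on_def x2_def)
  have "separated_on q m {0, b'} x2 y"
    using l by (intro separated_on_cong[OF _ sep0]) (auto simp: agree_on_def x2_def)
  then have "separated_on q m {0, l} x2 y \<or> separated_on q m {l, b'} x2 y"
    using separated_on_split \<alpha> by (simp add: x2_def)
  then show ?thesis
  proof
    assume "separated_on q m {l, b'} x2 y"
    then show ?thesis
      using to_x2 elem_moves_normal_of_nonzero_pair[OF \<alpha> x2] b' l \<open>l < n\<close> \<open>l \<noteq> 0\<close>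
      by (meson rtranclp_trans)
  next
    assume sep2: "separated_on q m {0, l} x2 y"
    define x3 where "x3 = x2(b' := of_bool (y b' = 0))"
    have x3: "x3 \<in> points n"
      using x2 b' by (auto simp: x3_def points_def)
    have "elem_moves q n (x2, y) (x3, y)"
      using b' l \<open>l < n\<close> x2 x3 by (intro elem_moves_reassign[OF sep2]) (auto simp: agree_on_def x3_def)
    moreover have "separated_on q m {l, b'} x3 y"
      using \<alpha> l frob_ne_of_bool_eq_0 by (intro separated_on_pair) (auto simp: x3_def x2_def)
    then have "elem_moves q n (x3, y) (normal_point \<alpha> y, y)"
      using elem_moves_normal_of_nonzero_pair[OF \<alpha> x3] b' l \<open>l < n\<close> \<open>l \<noteq> 0\<close> by blast
    ultimately show ?thesis
      using to_x2 by (meson rtranclp_trans)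
  qed
qed

lemma exists_separated_pair:
  assumes pr: "frob_primitive q m (x a)" and a: "a < n" and nc: "\<not> frob_conj_on q {..<n} y x"
  shows "\<exists>b<n. b \<noteq> a \<and> separated_on q m {a, b} x (y::nat \<Rightarrow> 'a)"
proof (cases "\<exists>k. frob q k (y a) = x a")
  case False
  define b where "b = (if a = 0 then 1 else (0::nat))"
  have "b < n" "b \<noteq> a"
    using dim_ge_3 by (auto simp: b_def)
  moreover have "separated_on q m {a, b} x y"
    using False frob_regular_on_primitive[of x a, OF pr]
    by (auto simp: separated_on_def frob_conj_on_def agree_on_def frob_vec_apply)
  ultimately show ?thesis
    by blast
next
  case True
  then obtain k where k: "frob q k (y a) = x a"
    by blast
  obtain b where b: "b < n" "frob q k (y b) \<noteq> x b"
    using nc by (auto simp: frob_conj_on_def agree_on_def frob_vec_apply)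
  have "\<not> frob_conj_on q {a, b} y x"
  proof
    assume "frob_conj_on q {a, b} y x"
    then obtain k' where k': "frob q k' (y a) = x a" "frob q k' (y b) = x b"
      by (auto simp: frob_conj_on_def agree_on_def frob_vec_apply)
    then have "frob q k (y b) = frob q k' (y b)"
      using frob_primitive_exp_mod_eq[OF pr k k'(1)] by (metis frob_mod)
    then show False
      using b k' by simp
  qed
  then show ?thesis
    using b k frob_regular_on_primitive[of x a, OF pr]
    by (intro exI[of _ b]) (auto simp: separated_on_def)
qed

lemma elem_moves_normal:
  assumes \<alpha>: "frob_primitive q m \<alpha>" and x: "x \<in> points n" "a < n" "frob_primitive q m (x a)"
    and nc: "\<not> frob_conj_on q {..<n} y x"
  shows "elem_moves q n (x, y) (normal_point \<alpha> y, y :: nat \<Rightarrow> 'a)"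
  using exists_separated_pair[OF x(3,2) nc] elem_moves_normal_of_pair[OF \<alpha> x(1)] x(2) by blast

lemma elem_moves_std_of_fst_snd:
  assumes \<alpha>: "frob_primitive q m \<alpha>" and A: "A \<in> points n" "A 0 = \<alpha>"
    and B: "B \<in> points n" "B 0 = \<alpha>" "B 1 = of_bool (A 1 = 0)"
  shows "elem_moves q n (A, B) (std_point \<alpha>, std_partner (\<alpha>::'a))"
proof -
  define A' where "A' i = (if i = 0 then \<alpha> else if i = 1 then A 1 else 0)" for i :: nat
  define B' where "B' i = (if i = 0 then \<alpha> else if i = 1 then B 1 else if i = 2 then 1 else 0)" for i :: nat
  have pts: "A' \<in> points n" "B' \<in> points n"
    using dim_ge_3 by (auto simp: A'_def B'_def points_def)
  have "separated_on q m {0, 1} A B"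
    using A B \<alpha> by (intro separated_on_pair) (auto simp: frob_ne_of_bool_eq_0[of _ "A 1", THEN not_sym])
  then have 1: "elem_moves q n (A, B) (A', B)"
    using A pts dim_ge_3 by (intro elem_moves_reassign) (auto simp: agree_on_def A'_def)
  have "separated_on q m {0, 1} B A'"
    using A B \<alpha> by (intro separated_on_pair) (auto simp: A'_def frob_ne_of_bool_eq_0)
  then have "elem_moves q n (B, A') (B', A')"
    using B pts dim_ge_3 by (intro elem_moves_reassign) (auto simp: agree_on_def B'_def)
  then have 2: "elem_moves q n (A', B) (A', B')"
    using elem_moves_swap by fastforce
  have "separated_on q m {0, 2} A' B'"
    using \<alpha> by (intro separated_on_pair) (auto simp: A'_def B'_def)
  then have 3: "elem_moves q n (A', B') (std_point \<alpha>, B')"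
    using pts std_points dim_ge_3 by (intro elem_moves_reassign) (auto simp: agree_on_def A'_def std_point_def)
  have "separated_on q m {0, 2} B' (std_point \<alpha>)"
    using \<alpha> by (intro separated_on_pair) (auto simp: B'_def std_point_def)
  then have "elem_moves q n (B', std_point \<alpha>) (std_partner \<alpha>, std_point \<alpha>)"
    using pts std_points dim_ge_3
    by (intro elem_moves_reassign) (auto simp: agree_on_def B'_def std_partner_def)
  then have 4: "elem_moves q n (std_point \<alpha>, B') (std_point \<alpha>, std_partner \<alpha>)"
    using elem_moves_swap by fastforce
  show ?thesis
    using 1 2 3 4 by (meson rtranclp_trans)
qed

lemma exists_elem_moves_primitive_coordinates:
  assumes r: "r \<in> points n" "frob_regular_on q m {..<n} r"
    and u: "u \<in> points n" "frob_regular_on q m {..<n} u"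
    and nc: "\<not> frob_conj_on q {..<n} u (r :: nat \<Rightarrow> 'a)"
  shows "\<exists>x y. elem_moves q n (r, u) (x, y) \<and> x \<in> points n \<and> y \<in> points n \<and>
    frob_primitive q m (x 0) \<and> frob_primitive q m (y 1) \<and> \<not> frob_conj_on q {..<n} y x"
proof -
  have n: "0 < n" "1 < n"
    using dim_ge_3 by simp_all
  obtain f where f: "fq_poly q ({..<n} - {0}) f" and "frob_primitive q m (r 0 + f r)"
    using exists_primitive_coordinate[OF r(2) n(1)] by blast
  define x where "x = elementary 0 f r"
  define y where "y = elementary 0 f u"
  have x: "x \<in> points n" "frob_primitive q m (x 0)"
    using r \<open>frob_primitive q m (r 0 + f r)\<close> elementary_points[OF n(1)]
    by (simp_all add: x_def elementary_def)
  have y: "y \<in> points n" "frob_regular_on q m {..<n} y" "\<not> frob_conj_on q {..<n} y x"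
    using u nc elementary_points[OF n(1)]
    by (simp_all add: x_def y_def regular_on_elementary_iff[OF f] conj_on_elementary_iff[OF f])
  obtain g where g: "fq_poly q ({..<n} - {1}) g" and "frob_primitive q m (y 1 + g y)"
    using exists_primitive_coordinate[OF y(2) n(2)] by blast
  define x' where "x' = elementary 1 g x"
  define y' where "y' = elementary 1 g y"
  have "x' \<in> points n" "frob_primitive q m (x' 0)"
    using x elementary_points[OF n(2)] by (simp_all add: x'_def elementary_def)
  moreover have "y' \<in> points n" "frob_primitive q m (y' 1)"
    using y \<open>frob_primitive q m (y 1 + g y)\<close> elementary_points[OF n(2)]
    by (simp_all add: y'_def elementary_def)
  moreover have "\<not> frob_conj_on q {..<n} y' x'"
    using y(3) unfolding x'_def y'_def conj_on_elementary_iff[OF g] .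
  moreover have "elem_moves q n (r, u) (x', y')"
    using elem_move_elementary[OF n(1) f, of r u] elem_move_elementary[OF n(2) g, of x y]
    by (simp add: x_def y_def x'_def y'_def)
  ultimately show ?thesis
    by blast
qed

lemma elem_moves_std_of_primitive_coordinates:
  assumes \<alpha>: "frob_primitive q m \<alpha>"
    and x: "x \<in> points n" "frob_primitive q m (x 0)"
    and y: "y \<in> points n" "frob_primitive q m (y 1)"
    and nc: "\<not> frob_conj_on q {..<n} y (x :: nat \<Rightarrow> 'a)"
  shows "elem_moves q n (x, y) (std_point \<alpha>, std_partner \<alpha>)"
proof -
  have n: "0 < n" "1 < n"
    using dim_ge_3 by simp_all
  define A where "A = normal_point \<alpha> y"
  have "elem_moves q n (x, y) (A, y)"
    unfolding A_def by (rule elem_moves_normal[OF \<alpha> x(1) n(1) x(2) nc])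
  moreover have "separated_on q m {0, 1} A y"
    using \<alpha> frob_ne_of_bool_eq_0 by (intro separated_on_pair) (simp_all add: A_def normal_point_def)
  then have "\<not> frob_conj_on q {..<n} y A"
    using n frob_conj_on_mono[of q "{..<n}" y A "{0, 1}"] by (auto simp: separated_on_def)
  then have "\<not> frob_conj_on q {..<n} A y"
    using frob_conj_on_sym by blast
  then have "elem_moves q n (y, A) (normal_point \<alpha> A, A)"
    using elem_moves_normal[OF \<alpha> y(1) n(2) y(2)] by blast
  then have "elem_moves q n (A, y) (A, normal_point \<alpha> A)"
    using elem_moves_swap by fastforce
  moreover have "elem_moves q n (A, normal_point \<alpha> A) (std_point \<alpha>, std_partner \<alpha>)"
    using normal_point_points
    by (intro elem_moves_std_of_fst_snd[OF \<alpha>]) (simp_all add: A_def normal_point_def)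
  ultimately show ?thesis
    by (meson rtranclp_trans)
qed

lemma elem_moves_std_pair:
  assumes \<alpha>: "frob_primitive q m \<alpha>"
    and r: "r \<in> points n" "frob_regular_on q m {..<n} r"
    and u: "u \<in> points n" "frob_regular_on q m {..<n} u"
    and nc: "\<not> frob_conj_on q {..<n} u (r :: nat \<Rightarrow> 'a)"
  shows "elem_moves q n (r, u) (std_point \<alpha>, std_partner \<alpha>)"
  using exists_elem_moves_primitive_coordinates[OF r u nc]
    elem_moves_std_of_primitive_coordinates[OF \<alpha>] by (meson rtranclp_trans)

lemma tame_two_orbits:
  assumes s: "s \<in> bigX q m n" and r: "r \<in> bigX q m n" and u: "u \<in> bigX q m n"
    and su: "orbit q m s \<noteq> orbit q m u" and ru: "orbit q m r \<noteq> orbit q m u"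
  shows "\<exists>F \<in> tame q n. F ` orbit q m r = orbit q m s \<and> F ` orbit q m u = orbit q m (u::nat \<Rightarrow> 'a)"
proof -
  have pts: "s \<in> points n" "r \<in> points n" "u \<in> points n"
    using s r u by (simp_all add: bigX_def)
  obtain f where "frob_primitive q m (r 0 + f r)"
    using exists_primitive_coordinate[OF bigX_regular_on[OF r]] dim_ge_3 by fastforce
  then have "elem_moves q n (r, u) (std_point (r 0 + f r), std_partner (r 0 + f r))"
    and "elem_moves q n (s, u) (std_point (r 0 + f r), std_partner (r 0 + f r))"
    using pts bigX_regular_on[OF s] bigX_regular_on[OF r] bigX_regular_on[OF u]
      orbit_ne_imp_not_conj_on[OF _ _ su] orbit_ne_imp_not_conj_on[OF _ _ ru]
    by (simp_all add: elem_moves_std_pair)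
  then have "elem_moves q n (r, u) (s, u)"
    by (meson elem_moves_sym rtranclp_trans)
  then obtain F where "F \<in> tame q n" "F r = s" "F u = u"
    using elem_moves_tame pts by blast
  then show ?thesis
    using tame_image_orbit[of F n] by (intro bexI[of _ F]) simp_all
qed

end

theorem mainTheorem14:
  fixes q m n :: nat and s r u :: "nat \<Rightarrow> 'a::{field,finite}"
  assumes "\<exists>p k. prime p \<and> k > 0 \<and> q = p ^ k"
    and "m \<ge> 1"
    and "card (UNIV :: 'a set) = q ^ m"
    and "n \<ge> 3"
    and "s \<in> bigX q m n" and "r \<in> bigX q m n" and "u \<in> bigX q m n"
    and "orbit q m s \<noteq> orbit q m r" and "orbit q m s \<noteq> orbit q m u"
    and "orbit q m r \<noteq> orbit q m u"
  shows "\<exists>F \<in> tame q n. F ` orbit q m r = orbit q m s \<and> F ` orbit q m u = orbit q m u"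
proof -
  interpret galois_space q m "TYPE('a)" n
    using assms(1-4) by unfold_locales
  show ?thesis
    using tame_two_orbits assms(5-7,9,10) by blast
qed

end
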